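(* Let $\varphi:(0,1]\to[0,1]$ be an increasing submultiplicative function (i.e. $\varphi(xy)\le\varphi(x)\varphi(y)$ for $x,y\in(0,1]$) such that $\varphi(\lambda)<1$ for some $\lambda\in(0,1)$. Then there is a constant $C>0$ such that $$\varphi(x)\le \frac{C}{1+\log(1/x)}\qquad\text{for all }x\in(0,1].$$ *)

theory Defs
  imports Complex_Main
begin

end

theory Submission
  imports Defs
begin

text \<open>Submultiplicativity gives \<open>\<phi>(\<lambda>\<^sup>n) \<le> q\<^sup>n\<close> with \<open>q < 1\<close>, and by monotonicity
  \<open>\<phi> x \<le> q\<^sup>n\<close> as soon as \<open>x \<le> \<lambda>\<^sup>n\<close>. Choosing the largest such \<open>n\<close>, \<open>n\<close> grows like
  \<open>ln (1/x) / ln (1/\<lambda>)\<close>, and the geometric decay \<open>q\<^sup>n\<close> beats the linear growth of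
  \<open>1 + ln (1/x)\<close> by Bernoulli's inequality \<open>(1/q)\<^sup>n \<ge> 1 + n (1/q - 1)\<close>.\<close>

lemma power_mult_Bernoulli_le_one:
  fixes q :: real
  assumes "0 < q" "q \<le> 1"
  shows "q ^ n * (1 + real n * (1 / q - 1)) \<le> 1"
proof -
  have "1 + real n * (1 / q - 1) \<le> (1 + (1 / q - 1)) ^ n"
    using assms by (intro Bernoulli_inequality) simp
  also have "\<dots> = 1 / q ^ n"
    by (simp add: power_divide)
  finally show ?thesis
    using assms by (simp add: field_simps)
qed

lemma submultiplicative_power_le:
  fixes \<phi> :: "real \<Rightarrow> real"
  assumes nonneg: "\<And>x. x \<in> {0<..1} \<Longrightarrow> 0 \<le> \<phi> x"
    and one: "\<phi> 1 \<le> 1"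
    and submult: "\<And>x y. x \<in> {0<..1} \<Longrightarrow> y \<in> {0<..1} \<Longrightarrow> \<phi> (x * y) \<le> \<phi> x * \<phi> y"
    and l: "l \<in> {0<..1}"
  shows "\<phi> (l ^ n) \<le> \<phi> l ^ n"
proof (induction n)
  case 0
  then show ?case using one by simp
next
  case (Suc n)
  have ln: "l ^ n \<in> {0<..1}"
    using l by (simp add: power_le_one)
  have "\<phi> (l ^ Suc n) \<le> \<phi> l * \<phi> (l ^ n)"
    using submult[OF l ln] by simp
  also have "\<dots> \<le> \<phi> l * \<phi> l ^ n"
    using Suc.IH nonneg[OF l] by (rule mult_left_mono)
  finally show ?case by simp
qed

lemma obtain_power_bracket:
  fixes l x :: real
  assumes l: "0 < l" "l < 1" and x: "x \<in> {0<..1}"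
  obtains n :: nat where "x \<le> l ^ n" "ln (1 / x) < (real n + 1) * ln (1 / l)"
proof
  define L where "L = ln (1 / l)"
  have L: "L > 0"
    using l by (simp add: L_def ln_div)
  have lnx: "ln (1 / x) \<ge> 0"
    using x by (simp add: ln_div)
  define n where "n = nat \<lfloor>ln (1 / x) / L\<rfloor>"
  have n: "real n = of_int \<lfloor>ln (1 / x) / L\<rfloor>"
    using lnx L by (simp add: n_def)
  have "real n \<le> ln (1 / x) / L"
    using n by linarith
  then have "real n * L \<le> ln (1 / x)"
    using L by (simp add: field_simps)
  then have "ln x \<le> ln (l ^ n)"
    using x l by (simp add: ln_realpow L_def ln_div)
  then show "x \<le> l ^ n"
    using x l by simp
  have "ln (1 / x) / L < real n + 1"
    using n by linarith
  then show "ln (1 / x) < (real n + 1) * ln (1 / l)"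
    using L by (simp add: field_simps L_def)
qed

lemma log_bound_of_geometric_decay:
  fixes \<phi> :: "real \<Rightarrow> real"
  assumes q: "0 < q" "q < 1" and l: "0 < l" "l < 1"
    and nonneg: "\<And>x. x \<in> {0<..1} \<Longrightarrow> 0 \<le> \<phi> x"
    and decay: "\<And>n x. x \<in> {0<..1} \<Longrightarrow> x \<le> l ^ n \<Longrightarrow> \<phi> x \<le> q ^ n"
  shows "\<exists>C>0. \<forall>x\<in>{0<..1}. \<phi> x \<le> C / (1 + ln (1 / x))"
proof -
  define a where "a = 1 / q - 1"
  define L where "L = ln (1 / l)"
  define C where "C = max (1 + L) (L / a)"
  have a: "a > 0"
    using q by (simp add: a_def field_simps)
  have L: "L > 0"
    using l by (simp add: L_def ln_div)
  have "C > 0"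
    using L by (simp add: C_def)
  moreover have "\<phi> x \<le> C / (1 + ln (1 / x))" if x: "x \<in> {0<..1}" for x
  proof -
    obtain n where xn: "x \<le> l ^ n" and n: "ln (1 / x) < (real n + 1) * L"
      using obtain_power_bracket[OF l x] unfolding L_def by blast
    have "ln (1 / x) \<ge> 0"
      using x by (simp add: ln_div)
    then have pos: "1 + ln (1 / x) > 0"
      by simp
    have "L / a \<le> C"
      by (simp add: C_def)
    then have "L \<le> C * a"
      using a by (simp add: field_simps)
    then have "real n * L \<le> real n * (C * a)"
      by (simp add: mult_left_mono)
    moreover have "1 + L \<le> C"
      by (simp add: C_def)
    ultimately have "1 + ln (1 / x) \<le> C * (1 + real n * a)"
      using n by (simp add: algebra_simps)
    then have "\<phi> x * (1 + ln (1 / x)) \<le> q ^ n * (C * (1 + real n * a))"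
      using decay[OF x xn] nonneg[OF x] pos by (intro mult_mono) auto
    also have "\<dots> = C * (q ^ n * (1 + real n * a))"
      by simp
    also have "\<dots> \<le> C"
      using power_mult_Bernoulli_le_one[of q n] q \<open>C > 0\<close>
      by (simp add: a_def mult_left_le)
    finally show ?thesis
      using pos by (simp add: field_simps)
  qed
  ultimately show ?thesis by blast
qed

theorem lemma2p1:
  fixes \<phi> :: "real \<Rightarrow> real"
  assumes range: "\<And>x. x \<in> {0<..1} \<Longrightarrow> \<phi> x \<in> {0..1}"
    and incr: "mono_on {0<..1} \<phi>"
    and submult: "\<And>x y. x \<in> {0<..1} \<Longrightarrow> y \<in> {0<..1} \<Longrightarrow> \<phi> (x * y) \<le> \<phi> x * \<phi> y"
    and lam: "\<exists>l\<in>{0<..<1}. \<phi> l < 1"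
  shows "\<exists>C>0. \<forall>x\<in>{0<..1}. \<phi> x \<le> C / (1 + ln (1 / x))"
proof -
  obtain l where l: "0 < l" "l < 1" "\<phi> l < 1"
    using lam by auto
  \<comment> \<open>\<open>\<phi> l\<close> may be \<open>0\<close>, but the decay ratio must be positive.\<close>
  define q where "q = max (\<phi> l) (1 / 2)"
  have q: "0 < q" "q < 1"
    using l by (auto simp: q_def)
  have nonneg: "\<And>x. x \<in> {0<..1} \<Longrightarrow> 0 \<le> \<phi> x"
    using range by simp
  have "\<phi> x \<le> q ^ n" if x: "x \<in> {0<..1}" and xn: "x \<le> l ^ n" for n x
  proof -
    have ln: "l ^ n \<in> {0<..1}"
      using l by (simp add: power_le_one)
    have "\<phi> x \<le> \<phi> (l ^ n)"
      using mono_onD[OF incr x ln xn] .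
    also have "\<dots> \<le> \<phi> l ^ n"
      using submultiplicative_power_le[OF nonneg _ submult, of l n] range[of 1] l by simp
    also have "\<dots> \<le> q ^ n"
      using nonneg[of l] l by (intro power_mono) (auto simp: q_def)
    finally show ?thesis .
  qed
  then show ?thesis
    using log_bound_of_geometric_decay[where \<phi> = \<phi>, OF q l(1,2) nonneg] by blast
qed

end
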